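(* For every $k\in\mathbb N^+$, $P_2\le P_k$ (i.e. $P_2$ pp constructs $P_k$).
   Context: $P_k$ is the directed path with vertex set $\{0,\dots,k-1\}$ and edges $(i,i+1)$ for $0\le i<k-1$. A primitive positive formula is $\exists y_1,\dots,y_n(\psi_1\wedge\dots\wedge\psi_m)$ where each $\psi_i$ is $\bot$, $z_1=z_2$, or $E(z_1,z_2)$. For a digraph $H=(V,E)$, a pp power of dimension $d$ is the digraph on $V^d$ with edge set $\{(u,v):\phi(u_1,\dots,u_d,v_1,\dots,v_d)\text{ holds in }H\}$ for a pp formula $\phi$. $H\le G$ means $G$ is homomorphically equivalent (homomorphisms in both directions) to a pp power of $H$. *)

theory Defs
  imports Main
begin

type_synonym 'a digraph = "'a set \<times> ('a \<times> 'a) set"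

definition is_digraph :: "'a digraph \<Rightarrow> bool" where
  "is_digraph G \<longleftrightarrow> snd G \<subseteq> fst G \<times> fst G"

definition dpath :: "nat \<Rightarrow> nat digraph" where
  "dpath k = ({0..<k}, {(i, i + 1) | i. i + 1 < k})"

datatype atom = Bot | Eq nat nat | Edge nat nat

text \<open>A pp formula \<exists>y_1..y_n (psi_1 \<and> ... \<and> psi_m): the number n of existentially
  quantified variables and the list of atoms. For a pp power of dimension d, variables
  0..d-1 are u_1..u_d, d..2d-1 are v_1..v_d, and 2d..2d+n-1 are y_1..y_n.\<close>
type_synonym ppf = "nat \<times> atom list"

fun atom_vars :: "atom \<Rightarrow> nat set" where
  "atom_vars Bot = {}"
| "atom_vars (Eq i j) = {i, j}"
| "atom_vars (Edge i j) = {i, j}"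

definition pp_wf :: "nat \<Rightarrow> ppf \<Rightarrow> bool" where
  "pp_wf d \<phi> \<longleftrightarrow> (\<forall>a \<in> set (snd \<phi>). \<forall>i \<in> atom_vars a. i < 2 * d + fst \<phi>)"

fun atom_holds :: "'a digraph \<Rightarrow> (nat \<Rightarrow> 'a) \<Rightarrow> atom \<Rightarrow> bool" where
  "atom_holds H s Bot = False"
| "atom_holds H s (Eq i j) = (s i = s j)"
| "atom_holds H s (Edge i j) = ((s i, s j) \<in> snd H)"

definition pp_holds :: "'a digraph \<Rightarrow> ppf \<Rightarrow> 'a list \<Rightarrow> bool" where
  "pp_holds H \<phi> xs \<longleftrightarrow>
     (\<exists>ys. length ys = fst \<phi> \<and> set ys \<subseteq> fst H \<and>
        (\<forall>a \<in> set (snd \<phi>). atom_holds H (\<lambda>i. (xs @ ys) ! i) a))"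

definition pp_power :: "'a digraph \<Rightarrow> nat \<Rightarrow> ppf \<Rightarrow> 'a list digraph" where
  "pp_power H d \<phi> =
     ({u. length u = d \<and> set u \<subseteq> fst H},
      {(u, v). length u = d \<and> set u \<subseteq> fst H \<and> length v = d \<and> set v \<subseteq> fst H \<and>
               pp_holds H \<phi> (u @ v)})"

definition is_hom :: "('a \<Rightarrow> 'b) \<Rightarrow> 'a digraph \<Rightarrow> 'b digraph \<Rightarrow> bool" where
  "is_hom f G H \<longleftrightarrow> (\<forall>x \<in> fst G. f x \<in> fst H) \<and>
                    (\<forall>(x, y) \<in> snd G. (f x, f y) \<in> snd H)"

definition hom_equiv :: "'a digraph \<Rightarrow> 'b digraph \<Rightarrow> bool" where
  "hom_equiv G H \<longleftrightarrow> (\<exists>f. is_hom f G H) \<and> (\<exists>g. is_hom g H G)"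

text \<open>H \<le> G: G is homomorphically equivalent to a pp power of H.\<close>
definition pp_constructs :: "'a digraph \<Rightarrow> 'b digraph \<Rightarrow> bool" where
  "pp_constructs H G \<longleftrightarrow>
     (\<exists>d \<phi>. d \<ge> 1 \<and> pp_wf d \<phi> \<and> hom_equiv (pp_power H d \<phi>) G)"

end

theory Submission
  imports Defs
begin

text \<open>For k = 1 an unsatisfiable formula yields an edgeless pp power, hom-equivalent to P_1.
  For k = d + 1 \<ge> 2 take the pp power of dimension d defined by
  E(u_d, v_1) \<and> v_2 = u_1 \<and> ... \<and> v_d = u_(d-1). In P_2 its edges are exactly the pairs
  (w @ [0], 1 # w): a 0 is dropped at the end and a 1 is shifted in at the front. The number of
  ones therefore increases by exactly one along each edge, so it is a homomorphism to P_(d+1);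
  conversely i \<mapsto> 1^i 0^(d-i) maps P_(d+1) into the pp power.\<close>

definition shift_ppf :: "nat \<Rightarrow> ppf" where
  "shift_ppf d = (0, Edge (d - 1) d # map (\<lambda>i. Eq (d + Suc i) i) [0..<d - 1])"

lemma pp_wf_shift_ppf: "d \<ge> 1 \<Longrightarrow> pp_wf d (shift_ppf d)"
  by (auto simp: pp_wf_def shift_ppf_def)

lemma pp_holds_shift_ppf:
  assumes "length u = d" "length v = d" "d \<ge> 1"
  shows "pp_holds H (shift_ppf d) (u @ v) \<longleftrightarrow> (last u, hd v) \<in> snd H \<and> tl v = butlast u"
proof -
  have "pp_holds H (shift_ppf d) (u @ v) \<longleftrightarrow>
      (u ! (d - 1), v ! 0) \<in> snd H \<and> (\<forall>i < d - 1. v ! Suc i = u ! i)"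
    using assms by (auto simp: pp_holds_def shift_ppf_def nth_append)
  moreover have "(\<forall>i < d - 1. v ! Suc i = u ! i) \<longleftrightarrow> tl v = butlast u"
    using assms by (auto simp: list_eq_iff_nth_eq nth_tl nth_butlast)
  moreover have "u \<noteq> []" "v \<noteq> []" using assms by auto
  then have "u ! (d - 1) = last u" "v ! 0 = hd v"
    using assms by (simp_all add: last_conv_nth hd_conv_nth)
  ultimately show ?thesis by simp
qed

lemma edge_pp_power_dpath2_shift_ppf:
  assumes "d \<ge> 1"
  shows "(u, v) \<in> snd (pp_power (dpath 2) d (shift_ppf d)) \<longleftrightarrow>
    (\<exists>w. length w = d - 1 \<and> set w \<subseteq> {0..<2} \<and> u = w @ [0] \<and> v = 1 # w)"
proof
  assume "(u, v) \<in> snd (pp_power (dpath 2) d (shift_ppf d))"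
  then have len: "length u = d" "length v = d" and set: "set u \<subseteq> {0..<2}"
    and "pp_holds (dpath 2) (shift_ppf d) (u @ v)"
    by (auto simp: pp_power_def dpath_def)
  then have "last u = 0" "hd v = 1" "tl v = butlast u"
    using assms by (auto simp: pp_holds_shift_ppf dpath_def)
  moreover have "u \<noteq> []" "v \<noteq> []" using len assms by auto
  ultimately have "u = butlast u @ [0]" "v = 1 # butlast u"
    by (metis append_butlast_last_id, metis list.collapse)
  then show "\<exists>w. length w = d - 1 \<and> set w \<subseteq> {0..<2} \<and> u = w @ [0] \<and> v = 1 # w"
    using len set by (intro exI[of _ "butlast u"]) (auto dest: in_set_butlastD)
next
  assume "\<exists>w. length w = d - 1 \<and> set w \<subseteq> {0..<2} \<and> u = w @ [0] \<and> v = 1 # w"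
  then obtain w where w: "length w = d - 1" "set w \<subseteq> {0..<2}" "u = w @ [0]" "v = 1 # w"
    by blast
  then have len: "length u = d" "length v = d" using assms by auto
  have "pp_holds (dpath 2) (shift_ppf d) (u @ v)"
    unfolding pp_holds_shift_ppf[OF len assms] by (simp add: w dpath_def)
  with len w show "(u, v) \<in> snd (pp_power (dpath 2) d (shift_ppf d))"
    by (auto simp: pp_power_def dpath_def)
qed

lemma sum_list_le_length: "set xs \<subseteq> {0..<2::nat} \<Longrightarrow> sum_list xs \<le> length xs"
  by (induction xs) auto

lemma is_hom_sum_list_shift_ppf:
  assumes "d \<ge> 1"
  shows "is_hom sum_list (pp_power (dpath 2) d (shift_ppf d)) (dpath (Suc d))"
  unfolding is_hom_def
proof (intro conjI ballI)
  fix u assume "u \<in> fst (pp_power (dpath 2) d (shift_ppf d))"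
  then have "length u = d" "set u \<subseteq> {0..<2}" by (auto simp: pp_power_def dpath_def)
  then have "sum_list u \<le> d" using sum_list_le_length by metis
  then show "sum_list u \<in> fst (dpath (Suc d))" by (simp add: dpath_def)
next
  fix e assume e: "e \<in> snd (pp_power (dpath 2) d (shift_ppf d))"
  obtain u v where uv: "e = (u, v)" by fastforce
  with e obtain w where "length w = d - 1" "set w \<subseteq> {0..<2}" "u = w @ [0]" "v = 1 # w"
    using edge_pp_power_dpath2_shift_ppf[OF assms] by blast
  moreover from calculation have "sum_list w \<le> d - 1" using sum_list_le_length by metis
  ultimately show "case e of (u, v) \<Rightarrow> (sum_list u, sum_list v) \<in> snd (dpath (Suc d))"
    using uv assms by (auto simp: dpath_def)
qed

lemma is_hom_unary_shift_ppf:
  "is_hom (\<lambda>i. replicate i 1 @ replicate (d - i) 0) (dpath (Suc d)) (pp_power (dpath 2) d (shift_ppf d))"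
  unfolding is_hom_def
proof (intro conjI ballI)
  fix i assume "i \<in> fst (dpath (Suc d))"
  then show "replicate i 1 @ replicate (d - i) 0 \<in> fst (pp_power (dpath 2) d (shift_ppf d))"
    by (auto simp: dpath_def pp_power_def)
next
  fix e assume "e \<in> snd (dpath (Suc d))"
  then obtain i where e: "e = (i, i + 1)" and "i < d" by (auto simp: dpath_def)
  define w :: "nat list" where "w = replicate i 1 @ replicate (d - Suc i) 0"
  have "replicate i 1 @ replicate (d - i) 0 = w @ [0]"
    using \<open>i < d\<close> by (simp add: w_def replicate_app_Cons_same Suc_diff_Suc flip: replicate_Suc)
  moreover have "replicate (i + 1) 1 @ replicate (d - (i + 1)) 0 = 1 # w"
    by (simp add: w_def)
  moreover have "length w = d - 1" "set w \<subseteq> {0..<2}"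
    using \<open>i < d\<close> by (auto simp: w_def)
  ultimately have "(replicate i 1 @ replicate (d - i) 0, replicate (i + 1) 1 @ replicate (d - (i + 1)) 0)
      \<in> snd (pp_power (dpath 2) d (shift_ppf d))"
    using \<open>i < d\<close> by (subst edge_pp_power_dpath2_shift_ppf) auto
  with e show "case e of (i, j) \<Rightarrow>
      (replicate i 1 @ replicate (d - i) 0, replicate j 1 @ replicate (d - j) 0)
        \<in> snd (pp_power (dpath 2) d (shift_ppf d))"
    by simp
qed

lemma hom_equiv_edgeless:
  assumes "fst G \<noteq> {}" "fst H \<noteq> {}" "snd G = {}" "snd H = {}"
  shows "hom_equiv G H"
proof -
  obtain x y where "x \<in> fst G" "y \<in> fst H" using assms by blast
  then have "is_hom (\<lambda>_. y) G H" "is_hom (\<lambda>_. x) H G"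
    using assms by (auto simp: is_hom_def)
  then show ?thesis unfolding hom_equiv_def by blast
qed

theorem mainTheorem5:
  fixes k :: nat
  assumes "k \<ge> 1"
  shows "pp_constructs (dpath 2) (dpath k)"
proof (cases "k = 1")
  case True
  have "[0] \<in> fst (pp_power (dpath 2) 1 (0, [Bot]))" "0 \<in> fst (dpath k)"
    by (auto simp: pp_power_def dpath_def True)
  moreover have "snd (pp_power (dpath 2) 1 (0, [Bot])) = {}" "snd (dpath k) = {}"
    by (auto simp: pp_power_def pp_holds_def dpath_def True)
  ultimately have "hom_equiv (pp_power (dpath 2) 1 (0, [Bot])) (dpath k)"
    by (intro hom_equiv_edgeless) auto
  moreover have "pp_wf 1 (0, [Bot])" by (simp add: pp_wf_def)
  ultimately show ?thesis unfolding pp_constructs_def by blast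
next
  case False
  with assms obtain d where d: "d \<ge> 1" "k = Suc d" by (cases k) auto
  have "hom_equiv (pp_power (dpath 2) d (shift_ppf d)) (dpath k)"
    using is_hom_sum_list_shift_ppf[OF d(1)] is_hom_unary_shift_ppf
    unfolding hom_equiv_def d(2) by blast
  with d pp_wf_shift_ppf show ?thesis unfolding pp_constructs_def by blast
qed

end
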